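(* Let $n\ge1$ and let $D$ be the set of all linear orders $q$ on $[n]$ such that for every triple $i<j<k$ in $[n]$, $i$ is not ranked last among $\{i,j,k\}$ in $q$ and $k$ is not ranked first among $\{i,j,k\}$ in $q$. Then $|D|=F_{n+1}$, where $F_1=F_2=1$ and $F_{m}=F_{m-1}+F_{m-2}$ are the Fibonacci numbers.
   Context: Linear orders on $[n]$ are rankings of the alternatives $1,\dots,n$; "ranked last/first among $\{i,j,k\}$" refers to the restriction of the order to these three alternatives. *)

theory Defs
  imports Main "HOL-Number_Theory.Fib"
begin

text \<open>A linear order q on [n] = {1..n} is a relation q with linear_order_on {1..n} q;
  (a,b) \<in> q means a is ranked at or before (above) b.\<close>

definition ranked_last :: "(nat \<times> nat) set \<Rightarrow> nat \<Rightarrow> nat \<Rightarrow> nat \<Rightarrow> bool" where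
  "ranked_last q x y z \<longleftrightarrow> (y, x) \<in> q \<and> (z, x) \<in> q"

definition ranked_first :: "(nat \<times> nat) set \<Rightarrow> nat \<Rightarrow> nat \<Rightarrow> nat \<Rightarrow> bool" where
  "ranked_first q x y z \<longleftrightarrow> (x, y) \<in> q \<and> (x, z) \<in> q"

definition D_set :: "nat \<Rightarrow> (nat \<times> nat) set set" where
  "D_set n = {q. linear_order_on {1..n} q \<and>
     (\<forall>i j k. 1 \<le> i \<and> i < j \<and> j < k \<and> k \<le> n \<longrightarrow>
        \<not> ranked_last q i j k \<and> \<not> ranked_first q k i j)}"

end

theory Submission
  imports Defs
begin

text \<open>Both forbidden patterns rank k before i. With j = i + 1 they show that q never ranks k
  before i when k > i + 1, for otherwise i precedes i + 1, which precedes k, which precedes i;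
  conversely this property rules out both patterns. In such an order the maximum n is either
  ranked last, and deleting it leaves an arbitrary member of D_set (n - 1), or it is ranked
  directly before n - 1, which is then last, and deleting both leaves an arbitrary member of
  D_set (n - 2). Hence the cardinalities satisfy the Fibonacci recurrence, starting from
  one order on the empty set and one on a singleton.\<close>

definition add_last :: "'a set \<Rightarrow> 'a \<Rightarrow> 'a rel \<Rightarrow> 'a rel" where
  "add_last A a r = r \<union> insert a A \<times> {a}"

lemma mem_add_last_iff [simp]:
  "(x, y) \<in> add_last A a r \<longleftrightarrow> (x, y) \<in> r \<or> (y = a \<and> x \<in> insert a A)"
  by (auto simp: add_last_def)

lemma linear_order_on_total:
  assumes "linear_order_on A r" "x \<in> A" "y \<in> A"
  shows "(x, y) \<in> r \<or> (y, x) \<in> r"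
  using assms unfolding order_on_defs refl_on_def total_on_def by (cases "x = y") auto

lemma linear_order_on_Restr_subset:
  assumes "linear_order_on A r" "B \<subseteq> A"
  shows "linear_order_on B (Restr r B)"
  using assms unfolding order_on_defs refl_on_def trans_def antisym_def total_on_def
  by blast

lemma linear_order_on_add_last:
  assumes "linear_order_on A r" "a \<notin> A"
  shows "linear_order_on (insert a A) (add_last A a r)"
proof -
  have sub: "r \<subseteq> A \<times> A" and "refl_on A r" "trans r" "antisym r" "total_on A r"
    using assms(1) by (auto simp: order_on_defs)
  have "trans (add_last A a r)"
  proof (rule transI)
    fix x y z assume xy: "(x, y) \<in> add_last A a r" and yz: "(y, z) \<in> add_last A a r"
    show "(x, z) \<in> add_last A a r"
    proof (cases "z = a")
      case True
      then show ?thesis using xy sub by auto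
    next
      case False
      then have "(y, z) \<in> r" using yz by simp
      moreover from this have "(x, y) \<in> r" using xy sub assms(2) by auto
      ultimately show ?thesis using \<open>trans r\<close> by (auto dest: transD)
    qed
  qed
  moreover have "antisym (add_last A a r)"
    using \<open>antisym r\<close> sub assms(2) by (auto simp: antisym_def)
  moreover have "refl_on (insert a A) (add_last A a r)"
    using \<open>refl_on A r\<close> by (simp add: refl_on_def)
  moreover have "total_on (insert a A) (add_last A a r)"
    using \<open>total_on A r\<close> by (auto simp: total_on_def)
  ultimately show ?thesis
    using sub by (auto simp: order_on_defs)
qed

lemma Restr_add_last:
  assumes "r \<subseteq> A \<times> A" "a \<notin> A"
  shows "Restr (add_last A a r) A = r"
  using assms by auto

lemma add_last_Restr:
  assumes "linear_order_on (insert a A) r" "a \<notin> A" "\<forall>b\<in>A. (b, a) \<in> r"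
  shows "add_last A a (Restr r A) = r"
  using assms unfolding order_on_defs refl_on_def antisym_def
  by auto

lemma mem_D_set_iff:
  "q \<in> D_set n \<longleftrightarrow>
     linear_order_on {1..n} q \<and> (\<forall>i k. 1 \<le> i \<longrightarrow> Suc i < k \<longrightarrow> k \<le> n \<longrightarrow> (i, k) \<in> q)"
proof -
  have "(\<forall>i j k. 1 \<le> i \<and> i < j \<and> j < k \<and> k \<le> n \<longrightarrow>
           \<not> ranked_last q i j k \<and> \<not> ranked_first q k i j) \<longleftrightarrow>
        (\<forall>i k. 1 \<le> i \<longrightarrow> Suc i < k \<longrightarrow> k \<le> n \<longrightarrow> (i, k) \<in> q)"
    if lin: "linear_order_on {1..n} q"
  proof
    assume patterns: "\<forall>i j k. 1 \<le> i \<and> i < j \<and> j < k \<and> k \<le> n \<longrightarrow>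
      \<not> ranked_last q i j k \<and> \<not> ranked_first q k i j"
    show "\<forall>i k. 1 \<le> i \<longrightarrow> Suc i < k \<longrightarrow> k \<le> n \<longrightarrow> (i, k) \<in> q"
    proof (intro allI impI)
      fix i k assume bounds: "1 \<le> i" "Suc i < k" "k \<le> n"
      show "(i, k) \<in> q"
      proof (rule ccontr)
        assume not_ik: "(i, k) \<notin> q"
        then have "(k, i) \<in> q"
          using linear_order_on_total[OF lin, of i k] bounds by auto
        moreover have "\<not> ranked_last q i (Suc i) k" "\<not> ranked_first q k i (Suc i)"
          using patterns bounds by auto
        ultimately have "(Suc i, i) \<notin> q" "(k, Suc i) \<notin> q"
          unfolding ranked_last_def ranked_first_def by auto
        then have "(i, Suc i) \<in> q" "(Suc i, k) \<in> q"
          using linear_order_on_total[OF lin, of i "Suc i"]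
            linear_order_on_total[OF lin, of "Suc i" k] bounds by auto
        then show False
          using not_ik lin by (auto simp: order_on_defs dest: transD)
      qed
    qed
  next
    assume "\<forall>i k. 1 \<le> i \<longrightarrow> Suc i < k \<longrightarrow> k \<le> n \<longrightarrow> (i, k) \<in> q"
    moreover have "antisym q" using lin by (simp add: order_on_defs)
    ultimately show "\<forall>i j k. 1 \<le> i \<and> i < j \<and> j < k \<and> k \<le> n \<longrightarrow>
      \<not> ranked_last q i j k \<and> \<not> ranked_first q k i j"
      unfolding ranked_last_def ranked_first_def by (auto dest: antisymD)
  qed
  then show ?thesis unfolding D_set_def by blast
qed

lemma D_set_subset: "q \<in> D_set n \<Longrightarrow> q \<subseteq> {1..n} \<times> {1..n}"
  by (simp add: mem_D_set_iff order_on_defs)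

lemma finite_D_set: "finite (D_set n)"
proof (rule finite_subset)
  show "D_set n \<subseteq> Pow ({1..n} \<times> {1..n})"
    using D_set_subset by blast
qed simp

lemma D_set_0: "D_set 0 = {{}}"
  by (auto simp: mem_D_set_iff order_on_defs)

lemma D_set_1: "D_set (Suc 0) = {{(1, 1)}}"
  by (auto simp: mem_D_set_iff order_on_defs refl_on_def)

lemma Restr_in_D_set:
  assumes "q \<in> D_set n" "m \<le> n"
  shows "Restr q {1..m} \<in> D_set m"
  using assms linear_order_on_Restr_subset[of "{1..n}" q "{1..m}"] by (auto simp: mem_D_set_iff)

lemma add_last_in_D_set:
  assumes "q \<in> D_set m"
  shows "add_last {1..m} (Suc m) q \<in> D_set (Suc m)"
proof -
  have "linear_order_on {1..Suc m} (add_last {1..m} (Suc m) q)"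
    using assms linear_order_on_add_last[of "{1..m}" q "Suc m"]
    by (simp add: mem_D_set_iff atLeastAtMostSuc_conv)
  then show ?thesis
    using assms by (auto simp: mem_D_set_iff le_Suc_eq)
qed

definition add_inverted_pair :: "nat \<Rightarrow> nat rel \<Rightarrow> nat rel" where
  "add_inverted_pair m q =
     add_last (insert (Suc (Suc m)) {1..m}) (Suc m) (add_last {1..m} (Suc (Suc m)) q)"

lemma add_inverted_pair_in_D_set:
  assumes "q \<in> D_set m"
  shows "add_inverted_pair m q \<in> D_set (Suc (Suc m))"
proof -
  have "linear_order_on {1..m} q" using assms by (simp add: mem_D_set_iff)
  then have "linear_order_on (insert (Suc m) (insert (Suc (Suc m)) {1..m}))
      (add_inverted_pair m q)"
    unfolding add_inverted_pair_def by (intro linear_order_on_add_last) auto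
  moreover have "insert (Suc m) (insert (Suc (Suc m)) {1..m}) = {1..Suc (Suc m)}"
    by auto
  moreover have "(i, k) \<in> add_inverted_pair m q"
    if "1 \<le> i" "Suc i < k" and k: "k \<le> Suc (Suc m)" for i k
  proof -
    consider "k \<le> m" | "k = Suc m" | "k = Suc (Suc m)" using k by (force simp: le_Suc_eq)
    then show ?thesis
      using that assms by cases (auto simp: mem_D_set_iff add_inverted_pair_def)
  qed
  ultimately show ?thesis by (simp add: mem_D_set_iff)
qed

lemma D_set_Suc_Suc_cases:
  assumes q: "q \<in> D_set (Suc (Suc m))"
  obtains r where "r \<in> D_set (Suc m)" "q = add_last {1..Suc m} (Suc (Suc m)) r"
    | r where "r \<in> D_set m" "q = add_inverted_pair m r"
proof -
  have lin: "linear_order_on {1..Suc (Suc m)} q"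
    and below: "\<And>i. 1 \<le> i \<Longrightarrow> i \<le> m \<Longrightarrow> (i, Suc (Suc m)) \<in> q"
    using q by (auto simp: mem_D_set_iff)
  show thesis
  proof (cases "(Suc m, Suc (Suc m)) \<in> q")
    case True
    have "insert (Suc (Suc m)) {1..Suc m} = {1..Suc (Suc m)}" by auto
    then have "add_last {1..Suc m} (Suc (Suc m)) (Restr q {1..Suc m}) = q"
      using True lin below by (intro add_last_Restr) (auto simp: le_Suc_eq)
    then show thesis
      using that(1) Restr_in_D_set[OF q, of "Suc m"] by simp
  next
    case False
    define A where "A = insert (Suc (Suc m)) {1..m}"
    have inverted: "(Suc (Suc m), Suc m) \<in> q"
      using False linear_order_on_total[OF lin, of "Suc m" "Suc (Suc m)"] by simp
    have "trans q" using lin by (simp add: order_on_defs)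
    then have "\<forall>b\<in>A. (b, Suc m) \<in> q"
      using inverted below transD[of q _ "Suc (Suc m)" "Suc m"] unfolding A_def by auto
    moreover have "insert (Suc m) A = {1..Suc (Suc m)}" by (auto simp: A_def)
    ultimately have outer: "add_last A (Suc m) (Restr q A) = q"
      using lin by (intro add_last_Restr) (auto simp: A_def)
    have "linear_order_on A (Restr q A)"
      using lin by (rule linear_order_on_Restr_subset) (auto simp: A_def)
    then have "add_last {1..m} (Suc (Suc m)) (Restr (Restr q A) {1..m}) = Restr q A"
      using below by (intro add_last_Restr) (auto simp: A_def)
    moreover have "Restr (Restr q A) {1..m} = Restr q {1..m}" by (auto simp: A_def)
    ultimately have "add_inverted_pair m (Restr q {1..m}) = q"
      using outer by (simp add: add_inverted_pair_def A_def)
    then show thesis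
      using that(2) Restr_in_D_set[OF q, of m] by simp
  qed
qed

lemma D_set_Suc_Suc:
  "D_set (Suc (Suc m)) =
     add_last {1..Suc m} (Suc (Suc m)) ` D_set (Suc m) \<union> add_inverted_pair m ` D_set m"
proof (intro equalityI subsetI)
  fix q assume "q \<in> D_set (Suc (Suc m))"
  then show "q \<in> add_last {1..Suc m} (Suc (Suc m)) ` D_set (Suc m) \<union>
                   add_inverted_pair m ` D_set m"
    by (cases rule: D_set_Suc_Suc_cases) blast+
qed (blast intro: add_last_in_D_set add_inverted_pair_in_D_set)

lemma card_D_set_Suc_Suc:
  "card (D_set (Suc (Suc m))) = card (D_set (Suc m)) + card (D_set m)"
proof -
  have "inj_on (add_last {1..Suc m} (Suc (Suc m))) (D_set (Suc m))"
    by (rule inj_on_inverseI[where g = "\<lambda>q. Restr q {1..Suc m}"],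
        rule Restr_add_last[OF D_set_subset]) auto
  moreover have "inj_on (add_inverted_pair m) (D_set m)"
    by (rule inj_on_inverseI[where g = "\<lambda>q. Restr q {1..m}"])
      (use D_set_subset in \<open>auto simp: add_inverted_pair_def\<close>)
  moreover have "add_last {1..Suc m} (Suc (Suc m)) ` D_set (Suc m) \<inter>
                 add_inverted_pair m ` D_set m = {}"
  proof -
    have "(Suc (Suc m), Suc m) \<in> q" if "q \<in> add_inverted_pair m ` D_set m" for q
      using that by (auto simp: add_inverted_pair_def)
    moreover have "(Suc (Suc m), Suc m) \<notin> q"
      if "q \<in> add_last {1..Suc m} (Suc (Suc m)) ` D_set (Suc m)" for q
      using that D_set_subset by fastforce
    ultimately show ?thesis by blast
  qed
  ultimately show ?thesis
    unfolding D_set_Suc_Suc by (simp add: card_Un_disjoint finite_D_set card_image)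
qed

theorem proposition3:
  fixes n :: nat
  assumes "n \<ge> 1"
  shows "card (D_set n) = fib (n + 1)"
  by (induction n rule: fib.induct) (simp_all add: D_set_0 D_set_1 card_D_set_Suc_Suc)

end
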